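(* Let $d\ge1$ and $i\in\{1,\dots,d\}$. There is a constant $C$ such that for every admissible ball $B\subset\mathbb R^d$ and every $y\in B$, $$ r_B\int_{\mathbb R^d\setminus 2B}\Big|\int_0^1\nabla_y\Big(\frac{\phi_i(r,x,y)\,e^{-|\phi(r,x,y)|^2}}{(1-r^2)^{(d+1)/2}}+x_i\,e^{-|x|^2}\Big)\,d\rho(r)\Big|\,dx\le C.$$
   Context: For $x,y\in\mathbb R^d$ and $r\in(0,1)$ let $\phi(r,x,y)=\dfrac{ry-x}{\sqrt{1-r^2}}\in\mathbb R^d$, with components $\phi_i$. The measure $\rho$ on $(0,1)$ is $d\rho(r)=\dfrac{dr}{r\sqrt{-\log r}}$. A Euclidean ball $B$ with centre $c_B$ and radius $r_B$ is admissible if $r_B\le\min(1,1/|c_B|)$. $2B$ is the concentric ball of radius $2r_B$. *)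

theory Defs
  imports "HOL-Analysis.Analysis"
begin

definition phi :: "real \<Rightarrow> real^'n \<Rightarrow> real^'n \<Rightarrow> real^'n" where
  "phi r x y = (1 / sqrt (1 - r\<^sup>2)) *\<^sub>R (r *\<^sub>R y - x)"

definition grad :: "(real^'n \<Rightarrow> real) \<Rightarrow> real^'n \<Rightarrow> real^'n" where
  "grad f y = (\<chi> j. deriv (\<lambda>t. f (y + t *\<^sub>R axis j 1)) 0)"

text \<open>Admissible ball: 0 < r_B and r_B \<le> min(1, 1/|c_B|), with 1/0 = infinity.\<close>
definition admissible :: "real^'n \<Rightarrow> real \<Rightarrow> bool" where
  "admissible c rB \<longleftrightarrow> 0 < rB \<and> rB \<le> 1 \<and> rB * norm c \<le> 1"

definition kern :: "'n \<Rightarrow> real \<Rightarrow> real^'n \<Rightarrow> real^'n \<Rightarrow> real" where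
  "kern i r x y = (phi r x y $ i) * exp (- (norm (phi r x y))\<^sup>2)
       / (1 - r\<^sup>2) powr ((real CARD('n) + 1) / 2) + x $ i * exp (- (norm x)\<^sup>2)"

text \<open>Integral over (0,1) against d rho(r) = dr / (r sqrt(-log r)).\<close>
definition inner_int :: "'n \<Rightarrow> real^'n \<Rightarrow> real^'n \<Rightarrow> real^'n" where
  "inner_int i x y = (LINT r:{0<..<1}|lborel.
       (1 / (r * sqrt (- ln r))) *\<^sub>R grad (\<lambda>z. kern i r x z) y)"

end

theory Submission
  imports Defs "HOL-Probability.Distributions"
begin

(* Write a = phi r x y, c = r / sqrt(1 - r^2), d = CARD('n) and
   P = (1 - r^2)^((d+1)/2).  The term x_i e^{-|x|^2} does not depend on y, and
   phi r x y is affine in y with slope c, so the gradient of the kernel is explicit: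
     grad_j = c (delta_ij - 2 a_i a_j) e^{-|a|^2} / P.
   Since (1 + 2w) e^{-w} <= 3 e^{-w/2}, its norm is at most 3 d c e^{-|a|^2/2} / P,
   and together with -log r >= 1 - r the rho-integrand is dominated by a Gaussian
   majorant in x.  By Tonelli we integrate first in x: rescaling x = r y + sqrt(1-r^2) z
   gives at most (1 - r^2)^(d/2) times a Gaussian mass, and for r close to 1 the
   point r y stays well inside 2B (this is where admissibility r_B |c_B| <= 1 is used),
   which yields an extra factor exp(-r_B^2 / (16 (1 - r^2))).  What remains is a
   one-dimensional time profile in r whose integral is O(1/r_B), so the product with
   r_B is bounded. *)

section \<open>The gradient of the kernel\<close>

lemma phi_shift:
  "phi r x (y + t *\<^sub>R axis j 1) = phi r x y + (t * (r / sqrt (1 - r\<^sup>2))) *\<^sub>R axis j (1::real)"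
  unfolding phi_def by (simp add: algebra_simps)

lemma norm_add_axis_sq:
  fixes a :: "real^'n"
  shows "(norm (a + w *\<^sub>R axis j 1))\<^sup>2 = (norm a)\<^sup>2 + 2 * w * a$j + w\<^sup>2"
  unfolding power2_norm_eq_inner
  by (simp add: inner_add_left inner_add_right inner_axis inner_axis' power2_eq_square algebra_simps)

lemma line_gaussian_deriv:
  fixes A N c aj e K B :: real
  shows "((\<lambda>t. (A + t * c * e) * exp (- (N + 2 * (t*c) * aj + (t*c)\<^sup>2)) * K + B) has_real_derivative
       c * (e - 2 * A * aj) * exp (- N) * K) (at 0)"
  by (rule derivative_eq_intros refl | simp)+ (simp add: algebra_simps)

lemma grad_kern:
  fixes i :: "'n::finite" and r :: real and x y :: "real^'n"
  defines "a \<equiv> phi r x y" and "c \<equiv> r / sqrt (1 - r\<^sup>2)"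
    and "P \<equiv> (1 - r\<^sup>2) powr ((real CARD('n) + 1) / 2)"
  shows "grad (\<lambda>z. kern i r x z) y
       = (\<chi> j. c * ((if j = i then 1 else 0) - 2 * a$i * a$j) * exp (- (norm a)\<^sup>2) / P)"
proof -
  have "deriv (\<lambda>t. kern i r x (y + t *\<^sub>R axis j 1)) 0
      = c * ((if j = i then 1 else 0) - 2 * a$i * a$j) * exp (- (norm a)\<^sup>2) / P" for j
  proof -
    define e :: real where "e = (if j = i then 1 else 0)"
    have line: "(\<lambda>t. kern i r x (y + t *\<^sub>R axis j 1))
        = (\<lambda>t. (a$i + t * c * e) * exp (- ((norm a)\<^sup>2 + 2 * (t*c) * a$j + (t*c)\<^sup>2)) * (1/P)
               + x $ i * exp (- (norm x)\<^sup>2))"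
      by (rule ext, simp only: kern_def phi_shift norm_add_axis_sq)
         (simp add: a_def c_def P_def e_def axis_def algebra_simps add_divide_distrib)
    have "((\<lambda>t. kern i r x (y + t *\<^sub>R axis j 1)) has_real_derivative
        c * (e - 2 * a$i * a$j) * exp (- (norm a)\<^sup>2) / P) (at 0)"
      unfolding line using line_gaussian_deriv[of "a$i" c e "(norm a)\<^sup>2" "a$j" "1/P"]
      by (simp add: mult.commute mult.left_commute)
    then show ?thesis unfolding e_def by (rule DERIV_imp_deriv)
  qed
  then show ?thesis unfolding grad_def by simp
qed

section \<open>Pointwise domination of the integrand\<close>

lemma le_exp_half: "0 \<le> (w::real) \<Longrightarrow> w \<le> exp (w/2)"
proof -
  assume w: "0 \<le> w"
  have "exp (w/2) = exp (w/4)^2"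
    by (simp add: power2_eq_square exp_add[symmetric])
  moreover have "(1 + w/4)^2 \<le> exp (w/4)^2"
    using w exp_ge_add_one_self[of "w/4"] by (intro power_mono) auto
  moreover have "w \<le> (1 + w/4)^2"
    using zero_le_power2[of "1 - w/4"] by (simp add: power2_eq_square algebra_simps)
  ultimately show ?thesis by linarith
qed

text \<open>The polynomial factor of the gradient costs half of the Gaussian decay.\<close>
lemma poly_gauss_le: "0 \<le> (w::real) \<Longrightarrow> (1 + 2*w) * exp (-w) \<le> 3 * exp (-w/2)"
proof -
  assume w: "0 \<le> w"
  have "w * exp (-w/2) \<le> 1"
    using le_exp_half[OF w] by (simp add: exp_minus field_simps)
  moreover have "exp (-w/2) \<le> 1" using w by simp
  ultimately have "exp (-w/2) + 2 * (w * exp (-w/2)) \<le> 3" by linarith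
  then have "exp (-w/2) * (exp (-w/2) + 2 * (w * exp (-w/2))) \<le> exp (-w/2) * 3"
    by (intro mult_left_mono) auto
  moreover have "exp (-w) = exp (-w/2) * exp (-w/2)" by (simp add: exp_add[symmetric])
  ultimately show ?thesis by (simp add: algebra_simps)
qed

text \<open>Each of the d entries of the gradient is at most 3 c e^{-|a|^2/2} / P.\<close>
lemma norm_grad_kern_le:
  fixes i :: "'n::finite" and r :: real and x y :: "real^'n"
  assumes r: "0 < r" "r < 1"
  shows "norm (grad (\<lambda>z. kern i r x z) y)
    \<le> 3 * real CARD('n) * (r / sqrt (1 - r\<^sup>2)) * exp (- (norm (phi r x y))\<^sup>2 / 2)
         / (1 - r\<^sup>2) powr ((real CARD('n) + 1) / 2)"
proof -
  define a where "a = phi r x y"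
  define c where "c = r / sqrt (1 - r\<^sup>2)"
  define P where "P = (1 - r\<^sup>2) powr ((real CARD('n) + 1) / 2)"
  have r2: "r\<^sup>2 < 1" using r by (simp add: power_less_one_iff abs_less_iff)
  have c0: "0 \<le> c" using r r2 by (simp add: c_def)
  have P0: "0 < P" using r2 by (simp add: P_def)
  have entry: "\<bar>c * ((if j = i then 1 else 0) - 2 * a$i * a$j) * exp (- (norm a)\<^sup>2) / P\<bar>
      \<le> c * 3 * exp (- (norm a)\<^sup>2 / 2) / P" for j
  proof -
    have "\<bar>a$i * a$j\<bar> \<le> norm a * norm a"
      unfolding abs_mult by (intro mult_mono component_le_norm_cart) auto
    then have "\<bar>(if j = i then 1 else 0) - 2 * a$i * a$j\<bar> \<le> 1 + 2 * (norm a)\<^sup>2"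
      unfolding power2_eq_square by (auto simp: abs_le_iff)
    then have "\<bar>(if j = i then 1 else 0) - 2 * a$i * a$j\<bar> * exp (- (norm a)\<^sup>2)
        \<le> (1 + 2 * (norm a)\<^sup>2) * exp (- (norm a)\<^sup>2)"
      by (intro mult_right_mono) auto
    also have "\<dots> \<le> 3 * exp (- (norm a)\<^sup>2 / 2)" by (rule poly_gauss_le) simp
    finally show ?thesis
      using c0 P0 by (simp add: abs_mult divide_right_mono mult.assoc mult_left_mono)
  qed
  have "norm (grad (\<lambda>z. kern i r x z) y) \<le> (\<Sum>j::'n\<in>UNIV. c * 3 * exp (- (norm a)\<^sup>2 / 2) / P)"
    unfolding grad_kern a_def[symmetric] c_def[symmetric] P_def[symmetric]
    using entry by (intro order_trans[OF norm_le_l1_cart] sum_mono) simp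
  then show ?thesis by (simp add: a_def c_def P_def mult_ac)
qed

definition heat_weight :: "real \<Rightarrow> real \<Rightarrow> real" where
  "heat_weight d r = 3 * d / (sqrt (1 - r) * sqrt (1 - r\<^sup>2) * (1 - r\<^sup>2) powr ((d + 1) / 2))"

definition majorant :: "real \<Rightarrow> real^'n \<Rightarrow> real^'n \<Rightarrow> real \<Rightarrow> real" where
  "majorant d y x r = heat_weight d r * exp (- (norm (r *\<^sub>R y - x))\<^sup>2 / (2 * (1 - r\<^sup>2)))"

lemma integrand_le_majorant:
  fixes i :: "'n::finite" and r :: real and x y :: "real^'n"
  assumes r: "0 < r" "r < 1"
  shows "norm ((1 / (r * sqrt (- ln r))) *\<^sub>R grad (\<lambda>z. kern i r x z) y)
      \<le> majorant (real CARD('n)) y x r"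
proof -
  define s where "s = sqrt (1 - r\<^sup>2)"
  define P where "P = (1 - r\<^sup>2) powr ((real CARD('n) + 1) / 2)"
  define E where "E = exp (- (norm (phi r x y))\<^sup>2 / 2)"
  have r2: "r\<^sup>2 < 1" using r by (simp add: power_less_one_iff abs_less_iff)
  have s0: "0 < s" using r2 by (simp add: s_def)
  have sq: "sqrt (1 - r) \<le> sqrt (- ln r)" using ln_le_minus_one[OF r(1)] by simp
  have sq0: "0 < sqrt (1 - r)" using r by simp
  have "norm ((1 / (r * sqrt (- ln r))) *\<^sub>R grad (\<lambda>z. kern i r x z) y)
      = (1 / (r * sqrt (- ln r))) * norm (grad (\<lambda>z. kern i r x z) y)"
    using r sq sq0 by simp
  also have "\<dots> \<le> (1 / (r * sqrt (1 - r))) * (3 * real CARD('n) * (r / s) * E / P)"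
  proof (rule mult_mono)
    show "1 / (r * sqrt (- ln r)) \<le> 1 / (r * sqrt (1 - r))"
      using r sq sq0 by (intro divide_left_mono mult_left_mono mult_pos_pos) auto
    show "norm (grad (kern i r x) y) \<le> 3 * real CARD('n) * (r / s) * E / P"
      using norm_grad_kern_le[OF r, of i x y] by (simp add: s_def E_def P_def)
  qed (use r sq0 in auto)
  also have "\<dots> = heat_weight (real CARD('n)) r * E"
    using r by (simp add: heat_weight_def s_def P_def field_simps)
  also have "E = exp (- (norm (r *\<^sub>R y - x))\<^sup>2 / (2 * (1 - r\<^sup>2)))"
  proof -
    have "norm (phi r x y) = norm (r *\<^sub>R y - x) / s"
      unfolding phi_def s_def using s0 s_def by simp
    then show ?thesis using r2 by (simp add: E_def power_divide s_def)
  qed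
  finally show ?thesis by (simp add: majorant_def)
qed

text \<open>The Bochner integral defining inner_int is dominated by the majorant; when the
  integrand is not integrable the integral is 0 and the bound is trivial.\<close>
lemma norm_inner_int_le:
  fixes i :: "'n::finite" and x y :: "real^'n"
  shows "ennreal (norm (inner_int i x y))
    \<le> (\<integral>\<^sup>+ r. indicator {0<..<1} r * ennreal (majorant (real CARD('n)) y x r) \<partial>lborel)"
proof -
  define g where "g = (\<lambda>r::real. indicator {0<..<1} r *\<^sub>R
                        ((1 / (r * sqrt (- ln r))) *\<^sub>R grad (\<lambda>z. kern i r x z) y))"
  have ii: "inner_int i x y = integral\<^sup>L lborel g"
    unfolding inner_int_def set_lebesgue_integral_def g_def ..
  show ?thesis
  proof (cases "integrable lborel g")
    case True
    have "ennreal (norm (inner_int i x y)) \<le> (\<integral>\<^sup>+r. norm (g r) \<partial>lborel)"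
      unfolding ii by (rule integral_norm_bound_ennreal[OF True])
    also have "\<dots> \<le> (\<integral>\<^sup>+ r. indicator {0<..<1} r * ennreal (majorant (real CARD('n)) y x r) \<partial>lborel)"
      using integrand_le_majorant[of _ i x y]
      by (intro nn_integral_mono) (auto simp: g_def indicator_def intro!: ennreal_leI)
    finally show ?thesis .
  next
    case False
    then show ?thesis unfolding ii by (simp add: not_integrable_integral_eq)
  qed
qed


section \<open>Gaussian integrals in the space variable\<close>

text \<open>The one-dimensional Gaussian integral is finite (a rescaled normal density).\<close>
lemma gaussian_nn_integral_finite_1d:
  "(\<integral>\<^sup>+ t. ennreal (exp (- t\<^sup>2 / 4)) \<partial>(lborel::real measure)) < \<infinity>"
proof -
  have "integrable lborel (\<lambda>t. sqrt (4 * pi) * normal_density 0 (sqrt 2) t)"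
    by (intro integrable_mult_right integrable_normal_density) auto
  moreover have "(\<lambda>t. sqrt (4 * pi) * normal_density 0 (sqrt 2) t) = (\<lambda>t. exp (- t\<^sup>2 / 4))"
    by (rule ext) (simp add: normal_density_def)
  ultimately show ?thesis using integrableD(2) by (simp add: top.not_eq_extremum)
qed

text \<open>The Gaussian factorises over an orthonormal basis, so its integral over any
  Euclidean space is a finite power of the one-dimensional one.\<close>
lemma gaussian_nn_integral_finite:
  "(\<integral>\<^sup>+ z. ennreal (exp (- (norm z)\<^sup>2 / 4)) \<partial>(lborel::'a::euclidean_space measure)) < \<infinity>"
proof -
  have factor: "ennreal (exp (- (norm z)\<^sup>2 / 4)) = (\<Prod>b\<in>Basis. ennreal (exp (- (z \<bullet> b)\<^sup>2 / 4)))"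
    for z :: 'a
  proof -
    have "(norm z)\<^sup>2 = (\<Sum>b\<in>Basis. (z \<bullet> b)\<^sup>2)"
      unfolding power2_norm_eq_inner by (subst euclidean_inner) (simp add: power2_eq_square)
    then have "exp (- (norm z)\<^sup>2 / 4) = (\<Prod>b\<in>Basis. exp (- (z \<bullet> b)\<^sup>2 / 4))"
      by (simp add: exp_sum[symmetric] sum_divide_distrib[symmetric] sum_negf)
    then show ?thesis by (simp add: prod_ennreal)
  qed
  have "(\<integral>\<^sup>+ z. ennreal (exp (- (norm z)\<^sup>2 / 4)) \<partial>(lborel::'a measure))
      = (\<Prod>b\<in>(Basis::'a set). (\<integral>\<^sup>+ t. ennreal (exp (- t\<^sup>2 / 4)) \<partial>lborel))"
    unfolding factor by (rule nn_integral_lborel_prod) auto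
  also have "\<dots> < \<infinity>"
    using gaussian_nn_integral_finite_1d
    by (simp add: less_top[symmetric] ennreal_prod_eq_top power_eq_top_ennreal)
  finally show ?thesis .
qed

definition gauss_mass :: "'n::finite itself \<Rightarrow> real" where
  "gauss_mass _ = enn2real (\<integral>\<^sup>+ z. ennreal (exp (- (norm z)\<^sup>2 / 4)) \<partial>(lborel::(real^'n) measure))"

lemma gauss_mass_eq:
  "(\<integral>\<^sup>+ z. ennreal (exp (- (norm z)\<^sup>2 / 4)) \<partial>(lborel::(real^'n::finite) measure))
    = ennreal (gauss_mass TYPE('n))"
  unfolding gauss_mass_def using gaussian_nn_integral_finite by (simp add: ennreal_enn2real_if less_top)

lemma gauss_mass_nonneg: "0 \<le> gauss_mass TYPE('n::finite)"
  by (simp add: gauss_mass_def)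

lemma nn_integral_affine_change:
  fixes f :: "'a::euclidean_space \<Rightarrow> ennreal"
  assumes [measurable]: "f \<in> borel_measurable borel" and c: "c \<noteq> 0"
  shows "(\<integral>\<^sup>+x. f x \<partial>lborel) = ennreal (\<bar>c\<bar>^DIM('a)) * (\<integral>\<^sup>+x. f (t + c *\<^sub>R x) \<partial>lborel)"
  by (subst lborel_affine[OF c, of t]) (simp add: nn_integral_density nn_integral_distr nn_integral_cmult)

lemma outside_gaussian_rescaled:
  fixes c y :: "real^'n" and r rB :: real
  assumes r: "0 < r" "r < 1"
  shows "(\<integral>\<^sup>+ x. indicator (- ball c (2*rB)) x
              * ennreal (exp (- (norm (r *\<^sub>R y - x))\<^sup>2 / (2 * (1 - r\<^sup>2)))) \<partial>lborel)
    = ennreal (sqrt (1 - r\<^sup>2) ^ CARD('n)) *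
      (\<integral>\<^sup>+ z. indicator (- ball c (2*rB)) (r *\<^sub>R y + sqrt (1 - r\<^sup>2) *\<^sub>R z)
              * ennreal (exp (- (norm z)\<^sup>2 / 2)) \<partial>lborel)"
proof -
  define s where "s = sqrt (1 - r\<^sup>2)"
  have r2: "r\<^sup>2 < 1" using r by (simp add: power_less_one_iff abs_less_iff)
  have s0: "0 < s" using r2 by (simp add: s_def)
  have ss: "s\<^sup>2 = 1 - r\<^sup>2" using r2 by (simp add: s_def)
  have exponent: "- (norm (r *\<^sub>R y - (r *\<^sub>R y + s *\<^sub>R z)))\<^sup>2 / (2 * (1 - r\<^sup>2)) = - (norm z)\<^sup>2 / 2"
    for z :: "real^'n"
    unfolding ss[symmetric] using s0 by (simp add: power_mult_distrib field_simps)
  show ?thesis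
    using nn_integral_affine_change[of
        "\<lambda>x. indicator (- ball c (2*rB)) x * ennreal (exp (- (norm (r *\<^sub>R y - x))\<^sup>2 / (2 * (1 - r\<^sup>2))))"
        s "r *\<^sub>R y"] s0
    unfolding exponent by (simp add: s_def)
qed

text \<open>Away from r = 1 we simply drop the restriction to the complement of 2B.\<close>
lemma outside_gaussian_le:
  fixes c y :: "real^'n" and r rB :: real
  assumes r: "0 < r" "r < 1"
  shows "(\<integral>\<^sup>+ x. indicator (- ball c (2*rB)) x
              * ennreal (exp (- (norm (r *\<^sub>R y - x))\<^sup>2 / (2 * (1 - r\<^sup>2)))) \<partial>lborel)
    \<le> ennreal (sqrt (1 - r\<^sup>2) ^ CARD('n)) * ennreal (gauss_mass TYPE('n))"
  unfolding outside_gaussian_rescaled[OF r] gauss_mass_eq[symmetric]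
  by (intro mult_left_mono nn_integral_mono) (auto simp: indicator_def intro!: ennreal_leI)

text \<open>If r y lies at distance at most 3 r_B / 2 from c, every x outside 2B is at distance
  at least r_B / 2 from r y, which gains a factor exp(-r_B^2 / (16 (1 - r^2))).\<close>
lemma outside_gaussian_far_le:
  fixes c y :: "real^'n" and r rB :: real
  assumes r: "0 < r" "r < 1" and rB: "0 < rB" and near: "dist c (r *\<^sub>R y) \<le> 3 * rB / 2"
  shows "(\<integral>\<^sup>+ x. indicator (- ball c (2*rB)) x
              * ennreal (exp (- (norm (r *\<^sub>R y - x))\<^sup>2 / (2 * (1 - r\<^sup>2)))) \<partial>lborel)
    \<le> ennreal (sqrt (1 - r\<^sup>2) ^ CARD('n))
        * (ennreal (exp (- rB\<^sup>2 / (16 * (1 - r\<^sup>2)))) * ennreal (gauss_mass TYPE('n)))"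
  unfolding outside_gaussian_rescaled[OF r] gauss_mass_eq[symmetric]
proof (intro mult_left_mono)
  define s where "s = sqrt (1 - r\<^sup>2)"
  have r2: "r\<^sup>2 < 1" using r by (simp add: power_less_one_iff abs_less_iff)
  have s0: "0 < s" using r2 by (simp add: s_def)
  have ss: "s\<^sup>2 = 1 - r\<^sup>2" using r2 by (simp add: s_def)
  have pointwise: "indicator (- ball c (2*rB)) (r *\<^sub>R y + s *\<^sub>R z) * ennreal (exp (- (norm z)\<^sup>2 / 2))
     \<le> ennreal (exp (- rB\<^sup>2 / (16 * (1 - r\<^sup>2)))) * ennreal (exp (- (norm z)\<^sup>2 / 4))" for z :: "real^'n"
  proof (cases "r *\<^sub>R y + s *\<^sub>R z \<in> ball c (2*rB)")
    case False
    then have "2 * rB \<le> dist c (r *\<^sub>R y + s *\<^sub>R z)" by simp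
    also have "\<dots> \<le> dist c (r *\<^sub>R y) + s * norm z"
      using dist_triangle[of c "r *\<^sub>R y + s *\<^sub>R z" "r *\<^sub>R y"] s0 by (simp add: dist_norm)
    finally have "rB / 2 \<le> s * norm z" using near by linarith
    then have "(rB / 2)\<^sup>2 \<le> (s * norm z)\<^sup>2" using rB by (intro power_mono) auto
    then have "rB\<^sup>2 / (16 * (1 - r\<^sup>2)) \<le> (norm z)\<^sup>2 / 4"
      using r2 by (simp add: power_mult_distrib ss power_divide field_simps)
    then have "exp (- (norm z)\<^sup>2 / 2) \<le> exp (- rB\<^sup>2 / (16 * (1 - r\<^sup>2))) * exp (- (norm z)\<^sup>2 / 4)"
      by (simp add: exp_add[symmetric])
    then show ?thesis by (simp add: ennreal_mult[symmetric] ennreal_leI indicator_def)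
  qed simp
  show "(\<integral>\<^sup>+ z. indicator (- ball c (2*rB)) (r *\<^sub>R y + sqrt (1 - r\<^sup>2) *\<^sub>R z)
                  * ennreal (exp (- (norm z)\<^sup>2 / 2)) \<partial>lborel)
    \<le> ennreal (exp (- rB\<^sup>2 / (16 * (1 - r\<^sup>2))))
        * (\<integral>\<^sup>+ z. ennreal (exp (- (norm z)\<^sup>2 / 4)) \<partial>(lborel::(real^'n) measure))"
    unfolding s_def[symmetric] using pointwise
    by (subst nn_integral_cmult[symmetric]) (auto intro!: nn_integral_mono)
qed simp


section \<open>The time profile\<close>

text \<open>After integrating in x, the factor (1 - r^2)^(d/2) from the rescaling cancels
  most of the heat weight.\<close>
lemma heat_weight_rescaled:
  fixes n :: nat and r :: real
  assumes r: "0 < r" "r < 1"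
  shows "heat_weight (real n) r * sqrt (1 - r\<^sup>2) ^ n = 3 * real n / (sqrt (1 - r) * (1 - r\<^sup>2))"
proof -
  define s where "s = sqrt (1 - r\<^sup>2)"
  have r2: "r\<^sup>2 < 1" using r by (simp add: power_less_one_iff abs_less_iff)
  have s0: "0 < s" using r2 by (simp add: s_def)
  have ss: "s\<^sup>2 = 1 - r\<^sup>2" using r2 by (simp add: s_def)
  have s_powr: "s = (1 - r\<^sup>2) powr (1/2)" using r2 by (simp add: s_def powr_half_sqrt)
  have "(1 - r\<^sup>2) powr ((real n + 1) / 2) = s powr (real n + 1)"
    unfolding s_powr powr_powr by simp
  also have "\<dots> = s ^ (n + 1)" using s0 powr_realpow[of s "Suc n"] by (simp add: add.commute)
  finally have P: "(1 - r\<^sup>2) powr ((real n + 1) / 2) = s ^ (n+1)" .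
  have "0 < sqrt (1 - r)" using r by simp
  then show ?thesis
    unfolding heat_weight_def P unfolding s_def[symmetric] unfolding ss[symmetric] using s0
    by (simp add: field_simps power2_eq_square)
qed

lemma heat_weight_nonneg: "0 < r \<Longrightarrow> r < 1 \<Longrightarrow> 0 \<le> d \<Longrightarrow> 0 \<le> heat_weight d r"
  by (unfold heat_weight_def, intro divide_nonneg_nonneg mult_nonneg_nonneg)
     (auto simp: power_le_one)

text \<open>Trades the decay exp(-r_B^2 / (16 (1 - r^2))) near r = 1 for a factor (1 - r^2)^2.\<close>
lemma exp_neg_le_inverse_square: "0 < (w::real) \<Longrightarrow> exp (- w) \<le> 4 / w\<^sup>2"
proof -
  assume w: "0 < w"
  have "w/2 \<le> exp (w/2)" using exp_ge_add_one_self[of "w/2"] by linarith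
  then have "(w/2)^2 \<le> exp (w/2)^2" using w by (intro power_mono) auto
  moreover have "exp w = exp (w/2)^2" by (simp add: power2_eq_square exp_add[symmetric])
  ultimately have "w\<^sup>2 / 4 \<le> exp w" by (simp add: power_divide)
  then show ?thesis using w by (simp add: exp_minus field_simps)
qed

text \<open>An integrable majorant in r: the singular weight (1 - r)^(-3/2) away from 1, and
  a constant of size r_B^(-3) on the last interval of length r_B^2/4.\<close>
definition time_profile :: "real \<Rightarrow> real \<Rightarrow> real" where
  "time_profile rB r = indicator {0..1 - rB\<^sup>2/4} r * (1 / ((1 - r) * sqrt (1 - r)))
                       + indicator {1 - rB\<^sup>2/4..1} r * (1024 / rB^3)"

lemma time_profile_nonneg: "0 < rB \<Longrightarrow> 0 \<le> time_profile rB r"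
  unfolding time_profile_def indicator_def
  by (auto intro!: add_nonneg_nonneg mult_nonneg_nonneg) (insert zero_le_power2[of rB], linarith)+

lemma time_profile_integral:
  assumes rB: "0 < rB" "rB \<le> 1"
  shows "(\<integral>\<^sup>+ r. ennreal (time_profile rB r) \<partial>lborel) \<le> ennreal (260 / rB)"
proof -
  define a0 where "a0 = rB\<^sup>2/4"
  have a0: "0 < a0" "a0 \<le> 1/4" using rB by (auto simp: a0_def power_le_one)
  have sa0: "sqrt a0 = rB / 2" using rB by (simp add: a0_def real_sqrt_divide)
  have [measurable]: "(\<lambda>r::real. 1 / ((1 - r) * sqrt (1 - r))) \<in> borel_measurable borel"
    by measurable
  have singular_part: "(\<integral>\<^sup>+ r. ennreal (1 / ((1 - r) * sqrt (1 - r))) * indicator {0..1 - a0} r \<partial>lborel)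
      = ennreal (2 / sqrt a0 - 2)"
  proof -
    have "(\<integral>\<^sup>+ r. ennreal (1 / ((1 - r) * sqrt (1 - r))) * indicator {0..1 - a0} r \<partial>lborel)
        = ennreal (2 / sqrt (1 - (1 - a0)) - 2 / sqrt (1 - 0))"
    proof (rule nn_integral_FTC_Icc)
      fix r assume "r \<in> {0..1 - a0}"
      then have r1: "r < 1" using a0 by auto
      show "((\<lambda>r. 2 / sqrt (1 - r)) has_real_derivative 1 / ((1 - r) * sqrt (1 - r))) (at r)"
        using r1 by (auto intro!: derivative_eq_intros simp: field_simps)
      show "0 \<le> 1 / ((1 - r) * sqrt (1 - r))" using r1 by simp
    qed (use a0 in auto)
    then show ?thesis by simp
  qed
  have flat_part: "(\<integral>\<^sup>+ r. ennreal (1024 / rB^3) * indicator {1 - a0..1} r \<partial>lborel)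
      = ennreal (1024 / rB^3 * a0)"
    using a0 rB by (simp add: nn_integral_cmult_indicator ennreal_mult[symmetric])
  have "(\<integral>\<^sup>+ r. ennreal (time_profile rB r) \<partial>lborel)
     = (\<integral>\<^sup>+ r. ennreal (1 / ((1 - r) * sqrt (1 - r))) * indicator {0..1 - a0} r
              + ennreal (1024 / rB^3) * indicator {1 - a0..1} r \<partial>lborel)"
    unfolding time_profile_def a0_def[symmetric] using a0 rB
    by (intro nn_integral_cong)
       (auto simp: indicator_def ennreal_plus[symmetric] simp del: ennreal_plus)
  also have "\<dots> = ennreal (2 / sqrt a0 - 2) + ennreal (1024 / rB^3 * a0)"
    by (subst nn_integral_add) (auto simp: singular_part flat_part)
  also have "\<dots> = ennreal (4 / rB - 2) + ennreal (256 / rB)"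
  proof -
    have "2 / sqrt a0 - 2 = 4 / rB - 2" by (simp add: sa0)
    moreover have "1024 / rB^3 * a0 = 256 / rB"
      using rB by (simp add: a0_def power2_eq_square power3_eq_cube)
    ultimately show ?thesis by simp
  qed
  also have "\<dots> = ennreal (4 / rB - 2 + 256 / rB)"
    using rB by (intro ennreal_plus[symmetric]) (auto simp: field_simps)
  also have "\<dots> \<le> ennreal (260 / rB)" by (intro ennreal_leI) simp
  finally show ?thesis .
qed

lemma time_weight_le_profile:
  fixes r rB :: real
  assumes r: "0 < r" "r < 1" and rB: "0 < rB" "rB \<le> 1"
  shows "(if r \<le> 1 - rB\<^sup>2/4 then 1 else exp (- rB\<^sup>2 / (16 * (1 - r\<^sup>2))))
           / (sqrt (1 - r) * (1 - r\<^sup>2)) \<le> time_profile rB r"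
proof (cases "r \<le> 1 - rB\<^sup>2/4")
  case True
  have "1 - r \<le> 1 - r\<^sup>2" using r by (simp add: power2_eq_square mult_le_cancel_left1)
  then have "1 / (sqrt (1 - r) * (1 - r\<^sup>2)) \<le> 1 / ((1 - r) * sqrt (1 - r))"
    using r by (intro divide_left_mono) (auto simp: mult.commute)
  also have "\<dots> \<le> time_profile rB r"
    using True r rB unfolding time_profile_def by (simp add: indicator_def)
  finally show ?thesis using True by simp
next
  case False
  define q where "q = 1 - r\<^sup>2"
  define v where "v = sqrt (1 - r)"
  have q0: "0 < q" using r by (simp add: q_def power_less_one_iff)
  have v0: "0 < v" using r by (simp add: v_def)
  have vv: "v * v = 1 - r" using r by (simp add: v_def)
  have q_le: "q \<le> 2 * (v * v)"
    unfolding vv q_def using r zero_le_power2[of "1 - r"] by (simp add: power2_eq_square algebra_simps)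
  have "v\<^sup>2 \<le> (rB/2)\<^sup>2" using False by (simp add: power2_eq_square vv power_divide)
  moreover have "0 \<le> rB / 2" using rB by simp
  ultimately have v_le: "v \<le> rB / 2" by (rule power2_le_imp_le)
  have "exp (- (rB\<^sup>2 / (16 * q))) \<le> 4 / (rB\<^sup>2 / (16 * q))\<^sup>2"
    using rB q0 by (intro exp_neg_le_inverse_square) simp
  also have "\<dots> = 1024 * q\<^sup>2 / rB^4"
    using rB q0 by (simp add: power_divide field_simps power2_eq_square power4_eq_xxxx)
  finally have decay: "exp (- rB\<^sup>2 / (16 * q)) \<le> 1024 * q\<^sup>2 / rB^4" by simp
  have "exp (- rB\<^sup>2 / (16 * q)) / (v * q) \<le> 1024 * q\<^sup>2 / rB^4 / (v * q)"
    using decay v0 q0 by (intro divide_right_mono) auto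
  also have "\<dots> = 1024 * q / (v * rB^4)" using v0 q0 by (simp add: field_simps power2_eq_square)
  also have "\<dots> \<le> 1024 * (2 * (v * v)) / (v * rB^4)"
    using q_le v0 rB by (intro divide_right_mono) auto
  also have "\<dots> = 2048 * v / rB^4" using v0 by (simp add: field_simps)
  also have "\<dots> \<le> 2048 * (rB / 2) / rB^4" using v_le rB by (intro divide_right_mono) auto
  also have "\<dots> = 1024 / rB^3" using rB by (simp add: field_simps power4_eq_xxxx power3_eq_cube)
  also have "\<dots> = time_profile rB r"
    using False r unfolding time_profile_def by (simp add: indicator_def)
  finally show ?thesis using False by (simp add: q_def v_def)
qed


text \<open>This is where admissibility (r_B |c_B| <= 1) enters: for r within r_B^2/4 of 1 the
  point r y moves by at most r_B/2, so it stays well inside 2B.\<close>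
lemma admissible_time_shift:
  fixes c y :: "real^'n"
  assumes adm: "admissible c rB" and y: "y \<in> ball c rB" and r: "r \<le> 1" "1 - r \<le> rB\<^sup>2/4"
  shows "dist c (r *\<^sub>R y) \<le> 3 * rB / 2"
proof -
  have rB: "0 < rB" "rB \<le> 1" "rB * norm c \<le> 1" using adm by (auto simp: admissible_def)
  have "norm y \<le> norm c + rB"
    using y norm_triangle_ineq[of c "y - c"] by (simp add: dist_norm norm_minus_commute)
  then have "(1 - r) * norm y \<le> rB\<^sup>2/4 * (norm c + rB)"
    using r by (intro mult_mono) auto
  also have "\<dots> = rB * (rB * norm c + rB * rB) / 4" by (simp add: power2_eq_square algebra_simps)
  also have "\<dots> \<le> rB * (1 + 1) / 4"
    using rB by (intro divide_right_mono mult_left_mono add_mono) (auto simp: mult_le_one)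
  moreover have "y - r *\<^sub>R y = (1 - r) *\<^sub>R y" by (simp add: algebra_simps)
  ultimately have shift: "norm (y - r *\<^sub>R y) \<le> rB / 2" using r by simp
  have "dist c (r *\<^sub>R y) \<le> dist c y + norm (y - r *\<^sub>R y)"
    using dist_triangle[of c "r *\<^sub>R y" y] by (simp add: dist_norm)
  then show ?thesis using y shift by simp
qed

lemma outside_gaussian_bound:
  fixes c y :: "real^'n::finite"
  assumes adm: "admissible c rB" and y: "y \<in> ball c rB" and r: "0 < r" "r < 1"
  shows "(\<integral>\<^sup>+ x. indicator (- ball c (2*rB)) x
              * ennreal (exp (- (norm (r *\<^sub>R y - x))\<^sup>2 / (2 * (1 - r\<^sup>2)))) \<partial>lborel)
    \<le> ennreal (sqrt (1 - r\<^sup>2) ^ CARD('n)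
        * (if r \<le> 1 - rB\<^sup>2/4 then 1 else exp (- rB\<^sup>2 / (16 * (1 - r\<^sup>2))))
        * gauss_mass TYPE('n))"
proof (cases "r \<le> 1 - rB\<^sup>2/4")
  case True
  have "0 \<le> sqrt (1 - r\<^sup>2) ^ CARD('n)" using r by (simp add: power_le_one)
  then show ?thesis
    using outside_gaussian_le[OF r, of c rB y] True by (simp add: ennreal_mult gauss_mass_nonneg)
next
  case False
  have rB: "0 < rB" using adm by (simp add: admissible_def)
  have "dist c (r *\<^sub>R y) \<le> 3 * rB / 2"
    using False r by (intro admissible_time_shift[OF adm y]) auto
  moreover have "0 \<le> sqrt (1 - r\<^sup>2) ^ CARD('n)" using r by (simp add: power_le_one)
  ultimately show ?thesis
    using outside_gaussian_far_le[OF r rB] False by (simp add: ennreal_mult gauss_mass_nonneg mult.assoc)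
qed

lemma time_slice_bound:
  fixes c y :: "real^'n::finite"
  assumes adm: "admissible c rB" and y: "y \<in> ball c rB" and r: "0 < r" "r < 1"
  shows "(\<integral>\<^sup>+ x. indicator (- ball c (2*rB)) x * ennreal (majorant (real CARD('n)) y x r) \<partial>lborel)
    \<le> ennreal (3 * real CARD('n) * gauss_mass TYPE('n) * time_profile rB r)"
proof -
  define d where "d = real CARD('n)"
  define w where "w = (if r \<le> 1 - rB\<^sup>2/4 then 1 else exp (- rB\<^sup>2 / (16 * (1 - r\<^sup>2))))"
  have rB: "0 < rB" "rB \<le> 1" using adm by (auto simp: admissible_def)
  have r2: "r\<^sup>2 < 1" using r by (simp add: power_less_one_iff)
  have H0: "0 \<le> heat_weight d r" using r by (intro heat_weight_nonneg) (auto simp: d_def)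
  have w0: "0 \<le> w" by (simp add: w_def)
  have "(\<integral>\<^sup>+ x. indicator (- ball c (2*rB)) x * ennreal (majorant d y x r) \<partial>lborel)
      = ennreal (heat_weight d r) * (\<integral>\<^sup>+ x. indicator (- ball c (2*rB)) x
              * ennreal (exp (- (norm (r *\<^sub>R y - x))\<^sup>2 / (2 * (1 - r\<^sup>2)))) \<partial>lborel)"
    using H0 by (subst nn_integral_cmult[symmetric])
                (auto simp: majorant_def ennreal_mult mult_ac intro!: nn_integral_cong)
  also have "\<dots> \<le> ennreal (heat_weight d r) * ennreal (sqrt (1 - r\<^sup>2) ^ CARD('n) * w * gauss_mass TYPE('n))"
    unfolding w_def by (intro mult_left_mono outside_gaussian_bound[OF adm y r]) auto
  also have "\<dots> = ennreal (heat_weight d r * (sqrt (1 - r\<^sup>2) ^ CARD('n) * w * gauss_mass TYPE('n)))"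
    using H0 w0 r2 by (subst ennreal_mult) (auto simp: gauss_mass_nonneg)
  also have "heat_weight d r * (sqrt (1 - r\<^sup>2) ^ CARD('n) * w * gauss_mass TYPE('n))
      = 3 * d * gauss_mass TYPE('n) * (w / (sqrt (1 - r) * (1 - r\<^sup>2)))"
    using heat_weight_rescaled[OF r, of "CARD('n)"] unfolding d_def by (simp add: field_simps)
  also have "\<dots> \<le> ennreal (3 * d * gauss_mass TYPE('n) * time_profile rB r)"
    using time_weight_le_profile[OF r rB]
    by (intro ennreal_leI mult_left_mono) (auto simp: w_def d_def gauss_mass_nonneg)
  finally show ?thesis by (simp add: d_def)
qed

text \<open>Tonelli: integrate the majorant first in x, then in r.\<close>
lemma outside_norm_integral_le:
  fixes i :: "'n::finite" and c y :: "real^'n"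
  assumes adm: "admissible c rB" and y: "y \<in> ball c rB"
  shows "(\<integral>\<^sup>+ x. indicator (- ball c (2 * rB)) x * ennreal (norm (inner_int i x y)) \<partial>lborel)
    \<le> ennreal (3 * real CARD('n) * gauss_mass TYPE('n)) * ennreal (260 / rB)"
proof -
  define K where "K = 3 * real CARD('n) * gauss_mass TYPE('n)"
  define F where "F = (\<lambda>x r. indicator (- ball c (2*rB)) x
                           * (indicator {0<..<1} r * ennreal (majorant (real CARD('n)) y x r)) :: ennreal)"
  have rB: "0 < rB" "rB \<le> 1" using adm by (auto simp: admissible_def)
  have [measurable]: "case_prod F \<in> borel_measurable (lborel \<Otimes>\<^sub>M lborel)"
    unfolding F_def majorant_def heat_weight_def by measurable
  have inner_le: "indicator (- ball c (2 * rB)) x * ennreal (norm (inner_int i x y))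
      \<le> (\<integral>\<^sup>+ r. F x r \<partial>lborel)" for x
  proof -
    have [measurable]: "(\<lambda>r. indicator {0<..<1} r * ennreal (majorant (real CARD('n)) y x r)) \<in> borel_measurable lborel"
      unfolding majorant_def heat_weight_def by measurable
    show ?thesis
      unfolding F_def
      by (subst nn_integral_cmult) (auto intro!: mult_left_mono norm_inner_int_le)
  qed
  have "(\<integral>\<^sup>+ x. indicator (- ball c (2 * rB)) x * ennreal (norm (inner_int i x y)) \<partial>lborel)
      \<le> (\<integral>\<^sup>+ x. (\<integral>\<^sup>+ r. F x r \<partial>lborel) \<partial>lborel)"
    using inner_le by (rule nn_integral_mono)
  also have "\<dots> = (\<integral>\<^sup>+ r. (\<integral>\<^sup>+ x. F x r \<partial>lborel) \<partial>lborel)"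
    by (rule pair_sigma_finite.Fubini'[symmetric])
       (auto intro: pair_sigma_finite.intro sigma_finite_lborel)
  also have "\<dots> \<le> (\<integral>\<^sup>+ r. ennreal K * ennreal (time_profile rB r) \<partial>lborel)"
  proof (rule nn_integral_mono)
    fix r :: real
    show "(\<integral>\<^sup>+ x. F x r \<partial>lborel) \<le> ennreal K * ennreal (time_profile rB r)"
    proof (cases "r \<in> {0<..<1}")
      case True
      then show ?thesis
        using time_slice_bound[OF adm y, of r] time_profile_nonneg[OF rB(1)]
        by (simp add: F_def K_def ennreal_mult[symmetric] gauss_mass_nonneg)
    qed (simp add: F_def)
  qed
  also have "\<dots> = ennreal K * (\<integral>\<^sup>+ r. ennreal (time_profile rB r) \<partial>lborel)"
    by (rule nn_integral_cmult) (unfold time_profile_def, measurable)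
  also have "\<dots> \<le> ennreal K * ennreal (260 / rB)"
    using rB by (intro mult_left_mono time_profile_integral) auto
  finally show ?thesis by (simp add: K_def)
qed

theorem mainTheorem6:
  fixes i :: "'n::finite"
  shows "\<exists>C::real. \<forall>(c::real^'n) rB y. admissible c rB \<and> y \<in> ball c rB \<longrightarrow>
     ennreal rB * (\<integral>\<^sup>+ x. indicator (- ball c (2 * rB)) x * ennreal (norm (inner_int i x y)) \<partial>lborel)
       \<le> ennreal C"
proof (intro exI allI impI)
  define K where "K = 3 * real CARD('n) * gauss_mass TYPE('n)"
  fix c :: "real^'n" and rB :: real and y :: "real^'n"
  assume "admissible c rB \<and> y \<in> ball c rB"
  then have adm: "admissible c rB" and y: "y \<in> ball c rB" by auto
  have rB: "0 < rB" using adm by (simp add: admissible_def)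
  have K0: "0 \<le> K" by (simp add: K_def gauss_mass_nonneg)
  have "ennreal rB * (\<integral>\<^sup>+ x. indicator (- ball c (2 * rB)) x * ennreal (norm (inner_int i x y)) \<partial>lborel)
      \<le> ennreal rB * (ennreal K * ennreal (260 / rB))"
    unfolding K_def by (intro mult_left_mono outside_norm_integral_le[OF adm y]) auto
  also have "\<dots> = ennreal (260 * K)"
    using rB K0 by (simp add: ennreal_mult[symmetric])
  finally show "ennreal rB * (\<integral>\<^sup>+ x. indicator (- ball c (2 * rB)) x
                   * ennreal (norm (inner_int i x y)) \<partial>lborel) \<le> ennreal (260 * K)" .
qed

end
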